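(* Let $F_1,\ldots,F_N$ be distribution functions on $\mathbb{R}$ with finite variances, and for $k=1,\ldots,N$ let $(x^{(k)}_1,\ldots,x^{(k)}_{n_k})$ be a sample of size $n_k\ge1$ from $F_k(x-\theta)$, the $N$ samples being independent. For ${\bf s}=\{i_1,\ldots,i_m\}\subset\{1,\ldots,N\}$ let $t^{({\bf s})}_{n({\bf s})}$ be the Pitman estimator of $\theta$ from the pooled sample of size $n({\bf s})=n_{i_1}+\cdots+n_{i_m}$ consisting of all samples with indices in ${\bf s}$, and let $t_n^{(1,\ldots,N)}$ be the Pitman estimator of $\theta$ from the pooled sample of all $n=n_1+\cdots+n_N$ observations. Then for any $1\le m\le N$, $$\frac{1}{\mathrm{var}(t_n^{(1,\ldots,N)})}\ \ge\ \frac{1}{\binom{N-1}{m-1}}\sum_{\bf s}\frac{1}{\mathrm{var}(t^{({\bf s})}_{n({\bf s})})},$$ the sum being over all subsets ${\bf s}$ of $\{1,\ldots,N\}$ with exactly $m$ elements.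
   Context: A sample of size $n_k$ from $F_k(x-\theta)$ ($\theta\in\mathbb{R}$ unknown) consists of i.i.d. observations $x_j$ with $x_j-\theta\sim F_k$. For a collection of independent observations $z_1,\ldots,z_M$ each of the form $z_j=\theta+\varepsilon_j$ with $\varepsilon_j$ having a fixed distribution not depending on $\theta$, an estimator $t(z_1,\ldots,z_M)$ is equivariant if $t(z_1+c,\ldots,z_M+c)=t(z_1,\ldots,z_M)+c$ for all $c\in\mathbb{R}$, and the Pitman estimator is the equivariant estimator of minimal variance (given finite variances, it equals $\bar z-E_0(\bar z\mid z_1-\bar z,\ldots,z_M-\bar z)$, $E_0$ being expectation under $\theta=0$). *)

theory Defs
  imports "HOL-Probability.Probability"
begin

text \<open>Observations of the pooled sample with index set s: pairs (k,j) with k in s, j < n k;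
  observation (k,j) is the j-th observation of the k-th sample.\<close>
definition obs_index :: "(nat \<Rightarrow> nat) \<Rightarrow> nat set \<Rightarrow> (nat \<times> nat) set" where
  "obs_index n s = {(k, j). k \<in> s \<and> j < n k}"

definition sample_measure ::
  "(nat \<Rightarrow> real measure) \<Rightarrow> (nat \<Rightarrow> nat) \<Rightarrow> nat set \<Rightarrow> real \<Rightarrow> ((nat \<times> nat) \<Rightarrow> real) measure" where
  "sample_measure F n s \<theta> =
     PiM (obs_index n s) (\<lambda>(k, j). distr (F k) borel (\<lambda>x. x + \<theta>))"

definition sample_space :: "(nat \<Rightarrow> nat) \<Rightarrow> nat set \<Rightarrow> ((nat \<times> nat) \<Rightarrow> real) measure" where
  "sample_space n s = PiM (obs_index n s) (\<lambda>_. borel)"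

definition equivariant ::
  "(nat \<Rightarrow> nat) \<Rightarrow> nat set \<Rightarrow> (((nat \<times> nat) \<Rightarrow> real) \<Rightarrow> real) \<Rightarrow> bool" where
  "equivariant n s t \<longleftrightarrow>
     (\<forall>z \<in> space (sample_space n s). \<forall>c::real.
        t (\<lambda>i\<in>obs_index n s. z i + c) = t z + c)"

definition est_var :: "'a measure \<Rightarrow> ('a \<Rightarrow> real) \<Rightarrow> real" where
  "est_var M t = (\<integral>x. (t x - (\<integral>y. t y \<partial>M))\<^sup>2 \<partial>M)"

definition equivariant_estimator ::
  "(nat \<Rightarrow> real measure) \<Rightarrow> (nat \<Rightarrow> nat) \<Rightarrow> nat set \<Rightarrow> (((nat \<times> nat) \<Rightarrow> real) \<Rightarrow> real) \<Rightarrow> bool" where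
  "equivariant_estimator F n s t \<longleftrightarrow>
     t \<in> borel_measurable (sample_space n s) \<and> equivariant n s t \<and>
     (\<forall>\<theta>. integrable (sample_measure F n s \<theta>) (\<lambda>z. (t z)\<^sup>2))"

definition is_pitman ::
  "(nat \<Rightarrow> real measure) \<Rightarrow> (nat \<Rightarrow> nat) \<Rightarrow> nat set \<Rightarrow> (((nat \<times> nat) \<Rightarrow> real) \<Rightarrow> real) \<Rightarrow> bool" where
  "is_pitman F n s t \<longleftrightarrow>
     equivariant_estimator F n s t \<and>
     (\<forall>t' \<theta>. equivariant_estimator F n s t' \<longrightarrow>
        est_var (sample_measure F n s \<theta>) t \<le> est_var (sample_measure F n s \<theta>) t')"

end

theory Submission
  imports Defs
begin

text \<open>Averaging the subsample estimators with weights w(s) summing to 1 gives an equivariant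
  estimator for the pooled sample, so the Pitman estimator of the pooled sample has variance at most
  that of the average. Each sample index lies in K = (N-1 choose m-1) of the m-subsets, so the
  variance drop lemma (an Efron-Stein type inequality, proved by successively projecting onto the
  functions not depending on one observation) bounds the variance of the average by
  K * sum of w(s)^2 * var t(s). Weights proportional to 1 / var t(s) then give the claim.\<close>

definition sq_integrable :: "'a measure \<Rightarrow> ('a \<Rightarrow> real) \<Rightarrow> bool" where
  "sq_integrable M f \<longleftrightarrow> f \<in> borel_measurable M \<and> integrable M (\<lambda>x. (f x)\<^sup>2)"

lemma sq_integrable_imp_integrable_mult:
  assumes "sq_integrable M f" "sq_integrable M g"
  shows "integrable M (\<lambda>x. f x * g x)"
proof (rule Bochner_Integration.integrable_bound)
  show "integrable M (\<lambda>x. (f x)\<^sup>2 + (g x)\<^sup>2)"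
    using assms by (auto simp: sq_integrable_def)
  show "(\<lambda>x. f x * g x) \<in> borel_measurable M"
    using assms by (auto simp: sq_integrable_def)
  have "2 * \<bar>a * b\<bar> \<le> a\<^sup>2 + b\<^sup>2" for a b :: real
    using sum_squares_bound[of "\<bar>a\<bar>" "\<bar>b\<bar>"] by (simp add: abs_mult power2_eq_square)
  then show "AE x in M. norm (f x * g x) \<le> norm ((f x)\<^sup>2 + (g x)\<^sup>2)"
    by (intro AE_I2) (smt (verit) real_norm_def zero_le_power2 abs_ge_zero)
qed

lemma sq_integrable_add: "sq_integrable M f \<Longrightarrow> sq_integrable M g \<Longrightarrow> sq_integrable M (\<lambda>x. f x + g x)"
  using sq_integrable_imp_integrable_mult[of M f g]
  by (auto simp: sq_integrable_def power2_eq_square ring_distribs)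

lemma sq_integrable_cmult: "sq_integrable M f \<Longrightarrow> sq_integrable M (\<lambda>x. c * f x)"
  by (auto simp: sq_integrable_def power_mult_distrib)

lemma sq_integrable_diff: "sq_integrable M f \<Longrightarrow> sq_integrable M g \<Longrightarrow> sq_integrable M (\<lambda>x. f x - g x)"
  using sq_integrable_add[of M f "\<lambda>x. (-1) * g x"] sq_integrable_cmult[of M g "-1"] by simp

lemma (in finite_measure) sq_integrable_const: "sq_integrable M (\<lambda>x. c)"
  by (auto simp: sq_integrable_def)

lemma sq_integrable_sum:
  "(\<And>a. a \<in> X \<Longrightarrow> sq_integrable M (f a)) \<Longrightarrow> sq_integrable M (\<lambda>x. \<Sum>a\<in>X. f a x)"
proof (induction X rule: infinite_finite_induct)
  case (insert a X)
  then show ?case by (simp add: sq_integrable_add)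
qed (simp_all add: sq_integrable_def)

lemma (in finite_measure) sq_integrable_imp_integrable:
  "sq_integrable M f \<Longrightarrow> integrable M f"
  by (auto simp: sq_integrable_def intro: square_integrable_imp_integrable)

lemma integral_power2_add_orthogonal:
  assumes f: "sq_integrable M f" and g: "sq_integrable M g"
    and orth: "(\<integral>x. f x * g x \<partial>M) = 0"
  shows "(\<integral>x. (f x + g x)\<^sup>2 \<partial>M) = (\<integral>x. (f x)\<^sup>2 \<partial>M) + (\<integral>x. (g x)\<^sup>2 \<partial>M)"
proof -
  have "(\<lambda>x. (f x + g x)\<^sup>2) = (\<lambda>x. (f x)\<^sup>2 + (g x)\<^sup>2 + 2 * (f x * g x))"
    by (auto simp: power2_eq_square algebra_simps)
  moreover have "integrable M (\<lambda>x. (f x)\<^sup>2)" "integrable M (\<lambda>x. (g x)\<^sup>2)"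
    using f g by (auto simp: sq_integrable_def)
  ultimately show ?thesis
    using sq_integrable_imp_integrable_mult[OF f g] orth by simp
qed

lemma integral_sum_mult_sum_orthogonal:
  assumes "finite X"
    and "\<And>a. a \<in> X \<Longrightarrow> sq_integrable M (f a)" "\<And>a. a \<in> X \<Longrightarrow> sq_integrable M (g a)"
    and "\<And>a b. a \<in> X \<Longrightarrow> b \<in> X \<Longrightarrow> (\<integral>x. f a x * g b x \<partial>M) = 0"
  shows "(\<integral>x. (\<Sum>a\<in>X. f a x) * (\<Sum>b\<in>X. g b x) \<partial>M) = 0"
proof -
  have "integrable M (\<lambda>x. f a x * g b x)" if "a \<in> X" "b \<in> X" for a b
    using assms(2,3) that by (blast intro: sq_integrable_imp_integrable_mult)
  then show ?thesis
    using assms(4) by (simp add: sum_product Bochner_Integration.integral_sum)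
qed

lemma integral_power2_sum_le_card:
  assumes "finite X" "B \<subseteq> X" "\<And>a. a \<in> X \<Longrightarrow> sq_integrable M (f a)"
    and "\<And>a x. a \<in> X - B \<Longrightarrow> f a x = 0"
  shows "(\<integral>x. (\<Sum>a\<in>X. f a x)\<^sup>2 \<partial>M) \<le> card B * (\<Sum>a\<in>X. \<integral>x. (f a x)\<^sup>2 \<partial>M)"
proof -
  have sumB: "(\<Sum>a\<in>X. h a) = (\<Sum>a\<in>B. h a)" if "\<And>a. a \<in> X - B \<Longrightarrow> h a = 0" for h :: "_ \<Rightarrow> real"
    using assms(1,2) that by (intro sum.mono_neutral_right) auto
  have sqB: "a \<in> B \<Longrightarrow> integrable M (\<lambda>x. (f a x)\<^sup>2)" for a
    using assms(2,3) by (auto simp: sq_integrable_def)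
  have "(\<Sum>a\<in>X. f a x) = (\<Sum>a\<in>B. f a x)" for x
    using assms(4) by (rule sumB)
  then have "(\<integral>x. (\<Sum>a\<in>X. f a x)\<^sup>2 \<partial>M) = (\<integral>x. (\<Sum>a\<in>B. f a x)\<^sup>2 \<partial>M)"
    by simp
  also have "\<dots> \<le> (\<integral>x. card B * (\<Sum>a\<in>B. (f a x)\<^sup>2) \<partial>M)"
  proof (rule integral_mono)
    show "integrable M (\<lambda>x. (\<Sum>a\<in>B. f a x)\<^sup>2)"
      using sq_integrable_sum[of B M f] assms(2,3) by (auto simp: sq_integrable_def)
    show "integrable M (\<lambda>x. card B * (\<Sum>a\<in>B. (f a x)\<^sup>2))"
      using sqB by auto
    show "(\<Sum>a\<in>B. f a x)\<^sup>2 \<le> card B * (\<Sum>a\<in>B. (f a x)\<^sup>2)" for x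
      using sum_squared_le_sum_of_squares[of "\<lambda>a. f a x" B] by (simp add: mult.commute)
  qed
  also have "\<dots> = card B * (\<Sum>a\<in>B. \<integral>x. (f a x)\<^sup>2 \<partial>M)"
    using sqB by (simp add: Bochner_Integration.integral_sum)
  also have "\<dots> = card B * (\<Sum>a\<in>X. \<integral>x. (f a x)\<^sup>2 \<partial>M)"
    using assms(4) by (subst sumB[of "\<lambda>a. \<integral>x. (f a x)\<^sup>2 \<partial>M"]) auto
  finally show ?thesis .
qed

lemma (in prob_space) power2_integral_le_nn_integral:
  fixes g :: "'a \<Rightarrow> real"
  assumes [measurable]: "g \<in> borel_measurable M"
  shows "ennreal ((\<integral>x. g x \<partial>M)\<^sup>2) \<le> (\<integral>\<^sup>+x. ennreal ((g x)\<^sup>2) \<partial>M)"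
proof cases
  assume sq: "integrable M (\<lambda>x. (g x)\<^sup>2)"
  have "0 \<le> variance g" by (simp add: integral_nonneg_AE)
  then have "(\<integral>x. g x \<partial>M)\<^sup>2 \<le> (\<integral>x. (g x)\<^sup>2 \<partial>M)"
    using variance_eq[OF square_integrable_imp_integrable[OF assms sq] sq] by simp
  then show ?thesis using sq by (simp add: nn_integral_eq_integral)
next
  assume "\<not> integrable M (\<lambda>x. (g x)\<^sup>2)"
  then have "(\<integral>\<^sup>+x. ennreal ((g x)\<^sup>2) \<partial>M) = \<top>"
    by (simp add: integrable_iff_bounded less_top[symmetric])
  then show ?thesis by simp
qed

lemma est_var_cmult: "est_var M (\<lambda>x. c * f x) = c\<^sup>2 * est_var M f"
  by (simp add: est_var_def right_diff_distrib[symmetric] power_mult_distrib)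

definition depends_only_on :: "'i set \<Rightarrow> (('i \<Rightarrow> 'a) \<Rightarrow> 'b) \<Rightarrow> bool" where
  "depends_only_on D f \<longleftrightarrow> (\<forall>x y. (\<forall>i\<in>D. x i = y i) \<longrightarrow> f x = f y)"

context finite_product_prob_space
begin

abbreviation "P \<equiv> \<Pi>\<^sub>M i\<in>I. M i"

definition resample where
  "resample i x y = (\<lambda>j\<in>I. if j = i then y j else x j)"

lemma resample_resample: "resample i (resample i x y) z = resample i x z"
  by (auto simp: resample_def)

lemma measurable_resample [measurable]:
  "(\<lambda>z. resample i (fst z) (snd z)) \<in> measurable (P \<Otimes>\<^sub>M P) P"
  unfolding resample_def by (intro measurable_restrict) auto

lemma distr_resample: "distr (P \<Otimes>\<^sub>M P) P (\<lambda>z. resample i (fst z) (snd z)) = P"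
proof (rule PiM_eqI)
  fix A assume A: "\<And>j. j \<in> I \<Longrightarrow> A j \<in> sets (M j)"
  define A1 where "A1 j = (if j = i then space (M j) else A j)" for j
  define A2 where "A2 j = (if j = i then A j else space (M j))" for j
  have A12: "j \<in> I \<Longrightarrow> A1 j \<in> sets (M j)" "j \<in> I \<Longrightarrow> A2 j \<in> sets (M j)" for j
    using A by (auto simp: A1_def A2_def)
  have "j \<in> I \<Longrightarrow> A j \<subseteq> space (M j)" for j
    using A sets.sets_into_space by blast
  then have preimage: "(\<lambda>z. resample i (fst z) (snd z)) -` Pi\<^sub>E I A \<inter> space (P \<Otimes>\<^sub>M P)
      = Pi\<^sub>E I A1 \<times> Pi\<^sub>E I A2"
    by (auto simp: space_pair_measure space_PiM PiE_iff resample_def A1_def A2_def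
        split: if_splits) blast+
  have "emeasure (distr (P \<Otimes>\<^sub>M P) P (\<lambda>z. resample i (fst z) (snd z))) (Pi\<^sub>E I A)
      = emeasure (P \<Otimes>\<^sub>M P) (Pi\<^sub>E I A1 \<times> Pi\<^sub>E I A2)"
    using A by (subst emeasure_distr) (auto simp: preimage finite_index intro!: sets_PiM_I_finite)
  also have "\<dots> = emeasure P (Pi\<^sub>E I A1) * emeasure P (Pi\<^sub>E I A2)"
    using A12 by (intro emeasure_pair_measure_Times sets_PiM_I_finite) (auto simp: finite_index)
  also have "\<dots> = (\<Prod>j\<in>I. emeasure (M j) (A1 j) * emeasure (M j) (A2 j))"
    using A12 by (simp add: emeasure_PiM finite_index prod.distrib)
  also have "\<dots> = (\<Prod>j\<in>I. emeasure (M j) (A j))"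
    by (intro prod.cong) (auto simp: A1_def A2_def M.emeasure_space_1)
  finally show "emeasure (distr (P \<Otimes>\<^sub>M P) P (\<lambda>z. resample i (fst z) (snd z))) (Pi\<^sub>E I A)
      = (\<Prod>j\<in>I. emeasure (M j) (A j))" .
qed (simp_all add: finite_index)

lemma measurable_resample_right:
  assumes "x \<in> space P"
  shows "resample i x \<in> measurable P P"
proof -
  have "(\<lambda>y. resample i (fst (x, y)) (snd (x, y))) \<in> measurable P P"
    using assms by measurable
  then show ?thesis by simp
qed

sublocale PP: pair_sigma_finite P P
  by unfold_locales

lemma nn_integral_resample:
  assumes [measurable]: "h \<in> borel_measurable P"
  shows "(\<integral>\<^sup>+x. h x \<partial>P) = (\<integral>\<^sup>+x. \<integral>\<^sup>+y. h (resample i x y) \<partial>P \<partial>P)"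
proof -
  have "(\<integral>\<^sup>+x. h x \<partial>P) = (\<integral>\<^sup>+z. h (resample i (fst z) (snd z)) \<partial>(P \<Otimes>\<^sub>M P))"
    by (subst (1) distr_resample[symmetric, of i], subst nn_integral_distr) auto
  then show ?thesis
    by (simp add: nn_integral_fst[symmetric])
qed

lemma integral_resample:
  fixes h :: "_ \<Rightarrow> real"
  assumes h: "integrable P h"
  shows "(\<integral>x. h x \<partial>P) = (\<integral>x. \<integral>y. h (resample i x y) \<partial>P \<partial>P)"
proof -
  have [measurable]: "h \<in> borel_measurable P" using h by auto
  have "integrable (P \<Otimes>\<^sub>M P) (\<lambda>z. h (resample i (fst z) (snd z)))"
    using h by (subst (asm) distr_resample[symmetric, of i], subst (asm) integrable_distr_eq) auto
  moreover have "(\<integral>x. h x \<partial>P) = (\<integral>z. h (resample i (fst z) (snd z)) \<partial>(P \<Otimes>\<^sub>M P))"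
    by (subst (1) distr_resample[symmetric, of i], subst integral_distr) auto
  ultimately show ?thesis
    using PP.integral_fst'[of "\<lambda>z. h (resample i (fst z) (snd z))"] by simp
qed

text \<open>Integrating out coordinate i is the conditional expectation given all other coordinates.\<close>

definition integrate_out where
  "integrate_out i (f :: _ \<Rightarrow> real) x = (\<integral>y. f (resample i x y) \<partial>P)"

lemma integrate_out_resample: "integrate_out i f (resample i x y) = integrate_out i f x"
  by (simp add: integrate_out_def resample_resample)

lemma borel_measurable_integrate_out [measurable]:
  assumes [measurable]: "f \<in> borel_measurable P"
  shows "integrate_out i f \<in> borel_measurable P"
proof -
  have "(\<lambda>z. f (resample i (fst z) (snd z))) \<in> borel_measurable (P \<Otimes>\<^sub>M P)"
    by measurable
  then show ?thesis
    unfolding integrate_out_def[abs_def]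
    by (rule borel_measurable_lebesgue_integral[OF measurable_cong[THEN iffD1], rotated]) auto
qed

lemma sq_integrable_integrate_out:
  assumes "sq_integrable P f"
  shows "sq_integrable P (integrate_out i f)"
proof -
  have [measurable]: "f \<in> borel_measurable P" and "integrable P (\<lambda>x. (f x)\<^sup>2)"
    using assms by (auto simp: sq_integrable_def)
  then have finite: "(\<integral>\<^sup>+x. ennreal ((f x)\<^sup>2) \<partial>P) < \<infinity>"
    by (simp add: integrable_iff_bounded)
  have "(\<integral>\<^sup>+x. ennreal ((integrate_out i f x)\<^sup>2) \<partial>P)
      \<le> (\<integral>\<^sup>+x. \<integral>\<^sup>+y. ennreal ((f (resample i x y))\<^sup>2) \<partial>P \<partial>P)"
    unfolding integrate_out_def
    by (intro nn_integral_mono prob_space.power2_integral_le_nn_integral prob_space_axioms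
        measurable_compose[OF measurable_resample_right]) auto
  also have "\<dots> = (\<integral>\<^sup>+x. ennreal ((f x)\<^sup>2) \<partial>P)"
    by (rule nn_integral_resample[symmetric]) simp
  finally show ?thesis
    using finite by (auto simp: sq_integrable_def integrable_iff_bounded)
qed

lemma integral_integrate_out:
  "integrable P f \<Longrightarrow> (\<integral>x. integrate_out i f x \<partial>P) = (\<integral>x. f x \<partial>P)"
  using integral_resample[of f i] by (simp add: integrate_out_def)

lemma integral_integrate_out_mult:
  assumes "sq_integrable P f" "sq_integrable P g"
  shows "(\<integral>x. integrate_out i f x * g x \<partial>P) = (\<integral>x. integrate_out i f x * integrate_out i g x \<partial>P)"
  using integral_resample[of "\<lambda>x. integrate_out i f x * g x" i]
    sq_integrable_imp_integrable_mult[OF sq_integrable_integrate_out assms(2)] assms(1)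
  by (simp add: integrate_out_resample integrate_out_def[of i g])

lemma integrate_out_eq_self:
  assumes "depends_only_on D f" "D \<subseteq> I" "i \<notin> D"
  shows "integrate_out i f x = f x"
proof -
  have "\<forall>j\<in>D. resample i x y j = x j" for y
    using assms(2,3) by (auto simp: resample_def)
  then have "f (resample i x y) = f x" for y
    using assms(1) unfolding depends_only_on_def by blast
  then show ?thesis
    by (simp add: integrate_out_def P.prob_space)
qed

lemma depends_only_on_integrate_out:
  assumes "depends_only_on D f"
  shows "depends_only_on (D - {i}) (integrate_out i f)"
  unfolding depends_only_on_def
proof (intro allI impI)
  fix x x' :: "'a \<Rightarrow> 'b" assume "\<forall>j\<in>D - {i}. x j = x' j"
  then have "\<forall>j\<in>D. resample i x y j = resample i x' y j" for y
    by (auto simp: resample_def)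
  then show "integrate_out i f x = integrate_out i f x'"
    using assms unfolding depends_only_on_def integrate_out_def by metis
qed

lemma integral_integrate_out_mult_residual:
  assumes "sq_integrable P f" "sq_integrable P g"
  shows "(\<integral>x. integrate_out i f x * (g x - integrate_out i g x) \<partial>P) = 0"
proof -
  have "integrable P (\<lambda>x. integrate_out i f x * h x)" if "sq_integrable P h" for h
    using that assms(1) by (intro sq_integrable_imp_integrable_mult sq_integrable_integrate_out)
  then show ?thesis
    using assms integral_integrate_out_mult[OF assms, of i]
    by (simp add: right_diff_distrib sq_integrable_integrate_out)
qed

lemma integral_power2_sum_integrate_out:
  assumes "finite X" "\<And>a. a \<in> X \<Longrightarrow> sq_integrable P (f a)"
  shows "(\<integral>x. (\<Sum>a\<in>X. f a x)\<^sup>2 \<partial>P)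
    = (\<integral>x. (\<Sum>a\<in>X. integrate_out i (f a) x)\<^sup>2 \<partial>P)
      + (\<integral>x. (\<Sum>a\<in>X. f a x - integrate_out i (f a) x)\<^sup>2 \<partial>P)"
proof -
  have g: "sq_integrable P (integrate_out i (f a))" if "a \<in> X" for a
    using assms(2)[OF that] by (rule sq_integrable_integrate_out)
  have h: "sq_integrable P (\<lambda>x. f a x - integrate_out i (f a) x)" if "a \<in> X" for a
    using assms(2)[OF that] g[OF that] by (rule sq_integrable_diff)
  have "(\<Sum>a\<in>X. f a x) = (\<Sum>a\<in>X. integrate_out i (f a) x) + (\<Sum>a\<in>X. f a x - integrate_out i (f a) x)"
    for x by (simp add: sum.distrib[symmetric])
  moreover have "(\<integral>x. (\<Sum>a\<in>X. integrate_out i (f a) x) * (\<Sum>b\<in>X. f b x - integrate_out i (f b) x) \<partial>P) = 0"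
    using g h assms by (intro integral_sum_mult_sum_orthogonal integral_integrate_out_mult_residual)
  ultimately show ?thesis
    using integral_power2_add_orthogonal[OF sq_integrable_sum[of X P] sq_integrable_sum[of X P]] g h
    by simp
qed

lemma integral_power2_sum_residual_le:
  assumes "finite X" "\<And>a. a \<in> X \<Longrightarrow> sq_integrable P (f a)"
    and "\<And>a. a \<in> X \<Longrightarrow> depends_only_on (D a) (f a)" "\<And>a. a \<in> X \<Longrightarrow> D a \<subseteq> I"
    and "card {a \<in> X. i \<in> D a} \<le> K"
  shows "(\<integral>x. (\<Sum>a\<in>X. f a x - integrate_out i (f a) x)\<^sup>2 \<partial>P)
    \<le> K * (\<Sum>a\<in>X. \<integral>x. (f a x - integrate_out i (f a) x)\<^sup>2 \<partial>P)"
proof -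
  have "f a x - integrate_out i (f a) x = 0" if "a \<in> X - {a \<in> X. i \<in> D a}" for a x
    using that assms(3,4) integrate_out_eq_self[of "D a" "f a" i x] by auto
  then have "(\<integral>x. (\<Sum>a\<in>X. f a x - integrate_out i (f a) x)\<^sup>2 \<partial>P)
      \<le> card {a \<in> X. i \<in> D a} * (\<Sum>a\<in>X. \<integral>x. (f a x - integrate_out i (f a) x)\<^sup>2 \<partial>P)"
    using assms(1,2) by (intro integral_power2_sum_le_card sq_integrable_diff sq_integrable_integrate_out) auto
  also have "\<dots> \<le> K * (\<Sum>a\<in>X. \<integral>x. (f a x - integrate_out i (f a) x)\<^sup>2 \<partial>P)"
    using assms(5) by (intro mult_right_mono sum_nonneg integral_nonneg_AE) auto
  finally show ?thesis .
qed

lemma variance_drop_centered: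
  assumes "finite J" "J \<subseteq> I" "finite X"
    and "\<And>a. a \<in> X \<Longrightarrow> sq_integrable P (f a)"
    and "\<And>a. a \<in> X \<Longrightarrow> depends_only_on (D a) (f a)" "\<And>a. a \<in> X \<Longrightarrow> D a \<subseteq> J"
    and "\<And>a. a \<in> X \<Longrightarrow> (\<integral>x. f a x \<partial>P) = 0"
    and "\<And>j. j \<in> J \<Longrightarrow> card {a \<in> X. j \<in> D a} \<le> K"
  shows "(\<integral>x. (\<Sum>a\<in>X. f a x)\<^sup>2 \<partial>P) \<le> K * (\<Sum>a\<in>X. \<integral>x. (f a x)\<^sup>2 \<partial>P)"
  using assms(1,2,4-)
proof (induction J arbitrary: f D rule: finite_induct)
  case empty
  have "f a x = 0" if a: "a \<in> X" for a x
  proof -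
    have "f a = (\<lambda>_. f a x)"
      using empty.prems(3,4)[OF a] by (auto simp: depends_only_on_def)
    then obtain c where "f a = (\<lambda>_. c)" by blast
    then show ?thesis
      using empty.prems(5)[OF a] by (simp add: P.prob_space)
  qed
  then show ?case
    using assms(3) by (simp add: sum_nonneg integral_nonneg_AE)
next
  case (insert i J)
  have "(\<integral>x. (\<Sum>a\<in>X. integrate_out i (f a) x)\<^sup>2 \<partial>P)
      \<le> K * (\<Sum>a\<in>X. \<integral>x. (integrate_out i (f a) x)\<^sup>2 \<partial>P)"
  proof (rule insert.IH[of "\<lambda>a. integrate_out i (f a)" "\<lambda>a. D a - {i}"])
    show "card {a \<in> X. j \<in> D a - {i}} \<le> K" if "j \<in> J" for j
    proof -
      have "card {a \<in> X. j \<in> D a - {i}} \<le> card {a \<in> X. j \<in> D a}"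
        using assms(3) by (intro card_mono) auto
      then show ?thesis
        using insert.prems(6)[of j] that by simp
    qed
  qed (use insert.prems in \<open>auto simp: integral_integrate_out sq_integrable_imp_integrable
        sq_integrable_integrate_out depends_only_on_integrate_out\<close>)
  moreover have "(\<integral>x. (\<Sum>a\<in>X. f a x - integrate_out i (f a) x)\<^sup>2 \<partial>P)
      \<le> K * (\<Sum>a\<in>X. \<integral>x. (f a x - integrate_out i (f a) x)\<^sup>2 \<partial>P)"
    using insert.prems assms(3) by (intro integral_power2_sum_residual_le) blast+
  moreover have "(\<integral>x. (f a x)\<^sup>2 \<partial>P) = (\<integral>x. (integrate_out i (f a) x)\<^sup>2 \<partial>P)
      + (\<integral>x. (f a x - integrate_out i (f a) x)\<^sup>2 \<partial>P)" if "a \<in> X" for a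
    using integral_power2_sum_integrate_out[where X="{a}" and i=i] insert.prems(2)[OF that] by simp
  ultimately show ?case
    using integral_power2_sum_integrate_out[OF assms(3) insert.prems(2), where i=i]
    by (simp add: sum.distrib ring_distribs)
qed

lemma variance_drop:
  assumes "finite X"
    and "\<And>a. a \<in> X \<Longrightarrow> sq_integrable P (f a)"
    and "\<And>a. a \<in> X \<Longrightarrow> depends_only_on (D a) (f a)" "\<And>a. a \<in> X \<Longrightarrow> D a \<subseteq> I"
    and "\<And>i. i \<in> I \<Longrightarrow> card {a \<in> X. i \<in> D a} \<le> K"
  shows "est_var P (\<lambda>x. \<Sum>a\<in>X. f a x) \<le> K * (\<Sum>a\<in>X. est_var P (f a))"
proof -
  define g where "g a x = f a x - (\<integral>y. f a y \<partial>P)" for a x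
  have "(\<integral>x. g a x \<partial>P) = 0" if "a \<in> X" for a
    using assms(2)[OF that] by (simp add: g_def sq_integrable_imp_integrable P.prob_space)
  moreover have "depends_only_on (D a) (g a)" if "a \<in> X" for a
    using assms(3)[OF that] by (simp add: g_def depends_only_on_def)
  moreover have "sq_integrable P (g a)" if "a \<in> X" for a
    using assms(2)[OF that] unfolding g_def[abs_def] by (intro sq_integrable_diff sq_integrable_const)
  moreover have "(\<Sum>a\<in>X. f a x) - (\<integral>y. (\<Sum>a\<in>X. f a y) \<partial>P) = (\<Sum>a\<in>X. g a x)" for x
    using assms(2) by (simp add: g_def sum_subtractf sq_integrable_imp_integrable)
  ultimately show ?thesis
    using variance_drop_centered[OF finite_index order_refl assms(1), of g D K] assms
    by (simp add: est_var_def g_def)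
qed

end

context product_prob_space
begin

lemma
  fixes h :: "_ \<Rightarrow> real"
  assumes "J \<subseteq> K" "finite K" and h: "h \<in> borel_measurable (\<Pi>\<^sub>M i\<in>J. M i)"
  shows integrable_restrict_PiM_iff:
      "integrable (\<Pi>\<^sub>M i\<in>K. M i) (\<lambda>x. h (restrict x J)) \<longleftrightarrow> integrable (\<Pi>\<^sub>M i\<in>J. M i) h"
    and integral_restrict_PiM:
      "(\<integral>x. h (restrict x J) \<partial>\<Pi>\<^sub>M i\<in>K. M i) = (\<integral>x. h x \<partial>\<Pi>\<^sub>M i\<in>J. M i)"
  using integrable_distr_eq[OF measurable_restrict_subset[OF assms(1)] h]
    integral_distr[OF measurable_restrict_subset[OF assms(1)] h]
  by (simp_all flip: distr_restrict[OF assms(1,2)])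

lemma
  assumes "J \<subseteq> K" "finite K" and t: "t \<in> borel_measurable (\<Pi>\<^sub>M i\<in>J. M i)"
  shows sq_integrable_restrict_PiM_iff:
      "sq_integrable (\<Pi>\<^sub>M i\<in>K. M i) (\<lambda>x. t (restrict x J)) \<longleftrightarrow> sq_integrable (\<Pi>\<^sub>M i\<in>J. M i) t"
    and est_var_restrict_PiM:
      "est_var (\<Pi>\<^sub>M i\<in>K. M i) (\<lambda>x. t (restrict x J)) = est_var (\<Pi>\<^sub>M i\<in>J. M i) t"
proof -
  have [measurable]: "t \<in> borel_measurable (\<Pi>\<^sub>M i\<in>J. M i)" by (fact t)
  then have "(\<lambda>x. t (restrict x J)) \<in> borel_measurable (\<Pi>\<^sub>M i\<in>K. M i)"
    using measurable_compose[OF measurable_restrict_subset[OF assms(1)]] by blast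
  then show "sq_integrable (\<Pi>\<^sub>M i\<in>K. M i) (\<lambda>x. t (restrict x J)) \<longleftrightarrow> sq_integrable (\<Pi>\<^sub>M i\<in>J. M i) t"
    using integrable_restrict_PiM_iff[OF assms(1,2), of "\<lambda>x. (t x)\<^sup>2"] by (simp add: sq_integrable_def)
  show "est_var (\<Pi>\<^sub>M i\<in>K. M i) (\<lambda>x. t (restrict x J)) = est_var (\<Pi>\<^sub>M i\<in>J. M i) t"
    unfolding est_var_def integral_restrict_PiM[OF assms(1,2) t]
    by (rule integral_restrict_PiM[OF assms(1,2)]) measurable
qed

end

lemma obs_index_finite: "finite s \<Longrightarrow> finite (obs_index n s)"
proof -
  have "obs_index n s = Sigma s (\<lambda>k. {..<n k})"
    by (auto simp: obs_index_def)
  then show "finite s \<Longrightarrow> finite (obs_index n s)" by simp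
qed

lemma obs_index_mono: "s \<subseteq> s' \<Longrightarrow> obs_index n s \<subseteq> obs_index n s'"
  by (auto simp: obs_index_def)

lemma card_obs_index_le: "finite S \<Longrightarrow> card {s \<in> S. i \<in> obs_index n s} \<le> card {s \<in> S. fst i \<in> s}"
  by (intro card_mono) (auto simp: obs_index_def)

lemma equivariant_restrict:
  assumes "s \<subseteq> s'" "equivariant n s t"
  shows "equivariant n s' (\<lambda>z. t (restrict z (obs_index n s)))"
  unfolding equivariant_def
proof (intro ballI allI)
  fix z :: "nat \<times> nat \<Rightarrow> real" and c
  have shifted: "restrict (\<lambda>i\<in>obs_index n s'. z i + c) (obs_index n s)
      = (\<lambda>i\<in>obs_index n s. restrict z (obs_index n s) i + c)"
    using obs_index_mono[OF assms(1)] by (auto simp: fun_eq_iff)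
  have "restrict z (obs_index n s) \<in> space (sample_space n s)"
    by (simp add: sample_space_def space_PiM)
  then show "t (restrict (\<lambda>i\<in>obs_index n s'. z i + c) (obs_index n s))
      = t (restrict z (obs_index n s)) + c"
    using assms(2) unfolding shifted equivariant_def by blast
qed

lemma equivariant_weighted_sum:
  assumes "\<And>a. a \<in> S \<Longrightarrow> equivariant n s (f a)" and "(\<Sum>a\<in>S. w a) = 1"
  shows "equivariant n s (\<lambda>z. \<Sum>a\<in>S. w a * f a z)"
  using assms by (simp add: equivariant_def distrib_left sum.distrib flip: sum_distrib_right)

text \<open>The law of observation (k, j); outside the indices 1..N it is an arbitrary probability
  measure, so that the product locales apply to the whole family.\<close>

definition obs_law :: "(nat \<Rightarrow> real measure) \<Rightarrow> nat \<Rightarrow> real \<Rightarrow> nat \<times> nat \<Rightarrow> real measure" where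
  "obs_law F N \<theta> = (\<lambda>(k, j). if k \<in> {1..N} then distr (F k) borel (\<lambda>x. x + \<theta>) else return borel 0)"

lemma sets_obs_law [simp]: "sets (obs_law F N \<theta> i) = sets borel"
  by (simp add: obs_law_def split: prod.split)

lemma sets_sample_space: "sets (sample_space n s) = sets (\<Pi>\<^sub>M i\<in>obs_index n s. obs_law F N \<theta> i)"
  unfolding sample_space_def by (rule sets_PiM_cong) auto

context
  fixes F :: "nat \<Rightarrow> real measure" and N :: nat
  assumes F_prob: "\<And>k. k \<in> {1..N} \<Longrightarrow> prob_space (F k)"
    and F_borel: "\<And>k. k \<in> {1..N} \<Longrightarrow> sets (F k) = sets borel"
begin

lemma finite_product_prob_space_obs_law:
  assumes "finite I"
  shows "finite_product_prob_space (obs_law F N \<theta>) I"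
proof -
  have "prob_space (obs_law F N \<theta> (k, j))" for k j
  proof (cases "k \<in> {1..N}")
    case True
    interpret prob_space "F k" by (rule F_prob[OF True])
    have "(\<lambda>x. x + \<theta>) \<in> measurable (F k) borel"
      unfolding measurable_cong_sets[OF F_borel[OF True] refl] by simp
    then show ?thesis
      using True by (simp add: obs_law_def prob_space_distr)
  next
    case False
    then show ?thesis by (auto simp: obs_law_def prob_space_return)
  qed
  then show ?thesis
    using assms by (auto simp: finite_product_prob_space_def finite_product_sigma_finite_def
        product_prob_space_def product_sigma_finite_def product_prob_space_axioms_def
        finite_product_sigma_finite_axioms_def prob_space_imp_sigma_finite)
qed

lemma sample_measure_eq_PiM_obs_law:
  "s \<subseteq> {1..N} \<Longrightarrow> sample_measure F n s \<theta> = (\<Pi>\<^sub>M i\<in>obs_index n s. obs_law F N \<theta> i)"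
  unfolding sample_measure_def by (rule PiM_cong) (auto simp: obs_law_def obs_index_def)

lemma
  assumes s: "s \<subseteq> {1..N}" and t: "equivariant_estimator F n s t"
  shows sq_integrable_lifted_estimator:
      "sq_integrable (sample_measure F n {1..N} \<theta>) (\<lambda>z. t (restrict z (obs_index n s)))"
    and est_var_lifted_estimator:
      "est_var (sample_measure F n {1..N} \<theta>) (\<lambda>z. t (restrict z (obs_index n s)))
         = est_var (sample_measure F n s \<theta>) t"
proof -
  have fin: "finite (obs_index n {1..N})" by (simp add: obs_index_finite)
  interpret finite_product_prob_space "obs_law F N \<theta>" "obs_index n {1..N}"
    using fin by (rule finite_product_prob_space_obs_law)
  have sub: "obs_index n s \<subseteq> obs_index n {1..N}" using s by (rule obs_index_mono)
  have meas: "t \<in> borel_measurable (\<Pi>\<^sub>M i\<in>obs_index n s. obs_law F N \<theta> i)"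
    using t unfolding measurable_cong_sets[OF sets_sample_space[of n s F N \<theta>, symmetric] refl]
    by (simp add: equivariant_estimator_def)
  have "sq_integrable (\<Pi>\<^sub>M i\<in>obs_index n s. obs_law F N \<theta> i) t"
    using t meas s
    by (simp add: equivariant_estimator_def sq_integrable_def sample_measure_eq_PiM_obs_law)
  then show "sq_integrable (sample_measure F n {1..N} \<theta>) (\<lambda>z. t (restrict z (obs_index n s)))"
    using sq_integrable_restrict_PiM_iff[OF sub fin meas] by (simp add: sample_measure_eq_PiM_obs_law)
  show "est_var (sample_measure F n {1..N} \<theta>) (\<lambda>z. t (restrict z (obs_index n s)))
      = est_var (sample_measure F n s \<theta>) t"
    using est_var_restrict_PiM[OF sub fin meas] s by (simp add: sample_measure_eq_PiM_obs_law)
qed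

lemma equivariant_estimator_weighted_sum:
  assumes sub: "\<And>s. s \<in> S \<Longrightarrow> s \<subseteq> {1..N}"
    and est: "\<And>s. s \<in> S \<Longrightarrow> equivariant_estimator F n s (t s)"
    and w: "(\<Sum>s\<in>S. w s) = 1"
  shows "equivariant_estimator F n {1..N} (\<lambda>z. \<Sum>s\<in>S. w s * t s (restrict z (obs_index n s)))"
  unfolding equivariant_estimator_def
proof (intro conjI allI)
  have "t s \<in> borel_measurable (sample_space n s)" if "s \<in> S" for s
    using est[OF that] by (simp add: equivariant_estimator_def)
  then have "(\<lambda>z. t s (restrict z (obs_index n s))) \<in> borel_measurable (sample_space n {1..N})"
    if "s \<in> S" for s
    using that measurable_compose[OF measurable_restrict_subset[OF obs_index_mono[OF sub[OF that]]]]
    unfolding sample_space_def by blast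
  then show "(\<lambda>z. \<Sum>s\<in>S. w s * t s (restrict z (obs_index n s))) \<in> borel_measurable (sample_space n {1..N})"
    by (intro borel_measurable_sum borel_measurable_times borel_measurable_const)
  have "sq_integrable (sample_measure F n {1..N} \<theta>)
      (\<lambda>z. \<Sum>s\<in>S. w s * t s (restrict z (obs_index n s)))" for \<theta>
    by (intro sq_integrable_sum sq_integrable_cmult sq_integrable_lifted_estimator sub est)
  then show "integrable (sample_measure F n {1..N} \<theta>)
      (\<lambda>z. (\<Sum>s\<in>S. w s * t s (restrict z (obs_index n s)))\<^sup>2)" for \<theta>
    by (simp add: sq_integrable_def)
  show "equivariant n {1..N} (\<lambda>z. \<Sum>s\<in>S. w s * t s (restrict z (obs_index n s)))"
    using est sub w unfolding equivariant_estimator_def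
    by (intro equivariant_weighted_sum equivariant_restrict) auto
qed

lemma pitman_var_le_weighted_sum:
  assumes pitman: "is_pitman F n {1..N} t\<^sub>0"
    and sub: "\<And>s. s \<in> S \<Longrightarrow> s \<subseteq> {1..N}"
    and est: "\<And>s. s \<in> S \<Longrightarrow> equivariant_estimator F n s (t s)"
    and cover: "\<And>k. k \<in> {1..N} \<Longrightarrow> card {s \<in> S. k \<in> s} \<le> K"
    and w: "(\<Sum>s\<in>S. w s) = 1"
  shows "est_var (sample_measure F n {1..N} \<theta>) t\<^sub>0
    \<le> K * (\<Sum>s\<in>S. (w s)\<^sup>2 * est_var (sample_measure F n s \<theta>) (t s))"
proof -
  have finS: "finite S" using w sum.infinite by fastforce
  have fin: "finite (obs_index n {1..N})" by (simp add: obs_index_finite)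
  interpret finite_product_prob_space "obs_law F N \<theta>" "obs_index n {1..N}"
    using fin by (rule finite_product_prob_space_obs_law)
  have P: "sample_measure F n {1..N} \<theta> = P"
    by (simp add: sample_measure_eq_PiM_obs_law)
  define T where "T s z = w s * t s (restrict z (obs_index n s))" for s z
  have "equivariant_estimator F n {1..N} (\<lambda>z. \<Sum>s\<in>S. T s z)"
    unfolding T_def using sub est w by (rule equivariant_estimator_weighted_sum)
  then have "est_var P t\<^sub>0 \<le> est_var P (\<lambda>z. \<Sum>s\<in>S. T s z)"
    using pitman unfolding is_pitman_def P[symmetric] by blast
  also have "\<dots> \<le> K * (\<Sum>s\<in>S. est_var P (T s))"
  proof (rule variance_drop[where D = "obs_index n"])
    show "sq_integrable P (T s)" if "s \<in> S" for s
      using sq_integrable_cmult[OF sq_integrable_lifted_estimator[OF sub est, OF that that, of \<theta>]]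
      unfolding T_def[abs_def] P .
    show "depends_only_on (obs_index n s) (T s)" for s
      unfolding depends_only_on_def T_def by (simp cong: restrict_cong)
    show "obs_index n s \<subseteq> obs_index n {1..N}" if "s \<in> S" for s
      using sub[OF that] by (rule obs_index_mono)
    show "card {s \<in> S. i \<in> obs_index n s} \<le> K" if "i \<in> obs_index n {1..N}" for i
      using card_obs_index_le[OF finS, of i n] cover[of "fst i"] that by (auto simp: obs_index_def)
  qed (fact finS)
  also have "(\<Sum>s\<in>S. est_var P (T s)) = (\<Sum>s\<in>S. (w s)\<^sup>2 * est_var (sample_measure F n s \<theta>) (t s))"
  proof (rule sum.cong[OF refl])
    fix s assume s: "s \<in> S"
    have "est_var P (T s) = (w s)\<^sup>2 * est_var P (\<lambda>z. t s (restrict z (obs_index n s)))"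
      unfolding T_def[abs_def] by (rule est_var_cmult)
    also have "\<dots> = (w s)\<^sup>2 * est_var (sample_measure F n s \<theta>) (t s)"
      using est_var_lifted_estimator[OF sub[OF s] est[OF s], of \<theta>] unfolding P by simp
    finally show "est_var P (T s) = (w s)\<^sup>2 * est_var (sample_measure F n s \<theta>) (t s)" .
  qed
  finally show ?thesis unfolding P .
qed

end

lemma card_subsets_containing_le:
  assumes "finite A"
  shows "card {s. s \<subseteq> A \<and> card s = m \<and> k \<in> s} \<le> (card A - 1) choose (m - 1)"
proof (cases "k \<in> A")
  case True
  let ?U = "{u. u \<subseteq> A - {k} \<and> card u = m - 1}"
  have "{s. s \<subseteq> A \<and> card s = m \<and> k \<in> s} \<subseteq> insert k ` ?U"
  proof
    fix s assume s: "s \<in> {s. s \<subseteq> A \<and> card s = m \<and> k \<in> s}"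
    then have "s = insert k (s - {k})" and "s - {k} \<in> ?U"
      using finite_subset[OF _ assms] by (auto simp: card_Diff_singleton)
    then show "s \<in> insert k ` ?U" by blast
  qed
  moreover have finU: "finite ?U"
    using assms by (simp add: finite_Collect_subsets)
  ultimately have "card {s. s \<subseteq> A \<and> card s = m \<and> k \<in> s} \<le> card (insert k ` ?U)"
    by (intro card_mono) auto
  also have "\<dots> \<le> card ?U"
    using finU by (rule card_image_le)
  also have "card ?U = (card A - 1) choose (m - 1)"
    using assms True by (simp add: n_subsets)
  finally show ?thesis .
next
  case False
  then have "{s. s \<subseteq> A \<and> card s = m \<and> k \<in> s} = {}" by auto
  then show ?thesis by (simp only: card.empty)
qed

lemma weighted_bound_imp_mult_sum_inverse_le:
  fixes v :: "'a \<Rightarrow> real"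
  assumes "finite S" "S \<noteq> {}" "\<And>s. s \<in> S \<Longrightarrow> 0 < v s"
    and bound: "\<And>w. (\<Sum>s\<in>S. w s) = 1 \<Longrightarrow> V \<le> C * (\<Sum>s\<in>S. (w s)\<^sup>2 * v s)"
  shows "V * (\<Sum>s\<in>S. 1 / v s) \<le> C"
proof -
  define Z where "Z = (\<Sum>s\<in>S. 1 / v s)"
  have Z: "0 < Z"
    unfolding Z_def using assms(1-3) by (intro sum_pos) auto
  \<comment> \<open>the weights minimising the bound are proportional to the precisions 1 / v s\<close>
  define w where "w s = (1 / v s) / Z" for s
  have "(\<Sum>s\<in>S. w s) = Z / Z"
    unfolding w_def Z_def by (rule sum_divide_distrib[symmetric])
  then have "(\<Sum>s\<in>S. w s) = 1"
    using Z by simp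
  then have "V \<le> C * (\<Sum>s\<in>S. (w s)\<^sup>2 * v s)" by (rule bound)
  also have "(\<Sum>s\<in>S. (w s)\<^sup>2 * v s) = (\<Sum>s\<in>S. (1 / v s) / Z\<^sup>2)"
    using assms(3) by (intro sum.cong) (auto simp: w_def power2_eq_square)
  also have "\<dots> = (\<Sum>s\<in>S. 1 / v s) / Z\<^sup>2"
    by (rule sum_divide_distrib[symmetric])
  also have "\<dots> = 1 / Z"
    using Z by (simp add: Z_def[symmetric] power2_eq_square)
  finally show ?thesis
    using Z by (simp add: Z_def[symmetric] field_simps)
qed

lemma sum_inverse_div_le_inverse_of_weighted_bound:
  fixes v :: "'a \<Rightarrow> real" and K :: nat
  assumes "finite S" "0 \<le> V" "\<And>s. s \<in> S \<Longrightarrow> 0 \<le> v s" "0 < K"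
    and bound: "\<And>w. (\<Sum>s\<in>S. w s) = 1 \<Longrightarrow> V \<le> K * (\<Sum>s\<in>S. (w s)\<^sup>2 * v s)"
  shows "(\<Sum>s\<in>S. inverse (ennreal (v s))) / of_nat K \<le> inverse (ennreal V)"
proof (cases "V = 0 \<or> S = {}")
  case False
  then have V: "0 < V" and "S \<noteq> {}" using assms(2) by auto
  have v: "0 < v s" if "s \<in> S" for s
  proof (rule ccontr)
    assume "\<not> 0 < v s"
    with assms(3)[OF that] have "v s = 0" by simp
    have "(\<Sum>s'\<in>S. (if s' = s then 1 else 0)\<^sup>2 * v s') = (\<Sum>s'\<in>S. if s' = s then v s else 0)"
      by (rule sum.cong) auto
    then have "V \<le> K * v s"
      using bound[of "\<lambda>s'. if s' = s then 1 else 0"] that assms(1) by simp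
    with \<open>v s = 0\<close> have "V \<le> 0" by simp
    with V show False by simp
  qed
  define Z where "Z = (\<Sum>s\<in>S. 1 / v s)"
  have Z: "0 \<le> Z"
    unfolding Z_def using v by (intro sum_nonneg) (simp add: less_imp_le)
  have "V * Z \<le> K"
    unfolding Z_def using weighted_bound_imp_mult_sum_inverse_le[OF assms(1) \<open>S \<noteq> {}\<close> v bound] .
  then have "Z / K \<le> 1 / V"
    using V assms(4) by (simp add: field_simps)
  have "(\<Sum>s\<in>S. inverse (ennreal (v s))) = (\<Sum>s\<in>S. ennreal (1 / v s))"
    using v by (intro sum.cong) (simp_all add: inverse_ennreal inverse_eq_divide)
  also have "\<dots> = ennreal Z"
    unfolding Z_def using v by (intro sum_ennreal) (simp add: less_imp_le)
  finally have "(\<Sum>s\<in>S. inverse (ennreal (v s))) / of_nat K = ennreal (Z / K)"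
    using Z assms(4) by (simp add: ennreal_of_nat_eq_real_of_nat divide_ennreal)
  also have "\<dots> \<le> ennreal (1 / V)"
    using \<open>Z / K \<le> 1 / V\<close> by (rule ennreal_leI)
  also have "\<dots> = inverse (ennreal V)"
    using V by (simp add: inverse_ennreal inverse_eq_divide)
  finally show ?thesis .
qed auto

theorem theorem3:
  fixes N m :: nat and F :: "nat \<Rightarrow> real measure" and n :: "nat \<Rightarrow> nat"
    and t :: "nat set \<Rightarrow> ((nat \<times> nat) \<Rightarrow> real) \<Rightarrow> real" and \<theta> :: real
  assumes F_prob: "\<And>k. k \<in> {1..N} \<Longrightarrow> prob_space (F k)"
    and F_borel: "\<And>k. k \<in> {1..N} \<Longrightarrow> sets (F k) = sets borel"
    and F_var: "\<And>k. k \<in> {1..N} \<Longrightarrow> integrable (F k) (\<lambda>x. x\<^sup>2)"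
    and n_pos: "\<And>k. k \<in> {1..N} \<Longrightarrow> n k \<ge> 1"
    and m: "1 \<le> m" "m \<le> N"
    and t_all: "is_pitman F n {1..N} (t {1..N})"
    and t_sub: "\<And>s. s \<subseteq> {1..N} \<Longrightarrow> card s = m \<Longrightarrow> is_pitman F n s (t s)"
  shows "inverse (ennreal (est_var (sample_measure F n {1..N} \<theta>) (t {1..N})))
     \<ge> (\<Sum>s | s \<subseteq> {1..N} \<and> card s = m.
            inverse (ennreal (est_var (sample_measure F n s \<theta>) (t s))))
        / of_nat ((N - 1) choose (m - 1))"
proof (rule sum_inverse_div_le_inverse_of_weighted_bound)
  let ?S = "{s. s \<subseteq> {1..N} \<and> card s = m}"
  show "finite ?S"
    by (rule finite_subset[of _ "Pow {1..N}"]) auto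
  show "0 < (N - 1) choose (m - 1)"
    using m by simp
  show "est_var (sample_measure F n {1..N} \<theta>) (t {1..N})
      \<le> real ((N - 1) choose (m - 1)) * (\<Sum>s\<in>?S. (w s)\<^sup>2 * est_var (sample_measure F n s \<theta>) (t s))"
    if "(\<Sum>s\<in>?S. w s) = 1" for w
  proof (rule pitman_var_le_weighted_sum[OF F_prob F_borel t_all _ _ _ that])
    show "card {s \<in> ?S. k \<in> s} \<le> (N - 1) choose (m - 1)" for k
      using card_subsets_containing_le[of "{1..N}" m k] by (simp add: conj_assoc)
  qed (use t_sub in \<open>auto simp: is_pitman_def\<close>)
qed (auto simp: est_var_def intro: integral_nonneg_AE)

end
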